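(* Let $f\in\mathbb{R}[x,y]$ be a polynomial of degree $n\ge 3$ and let $p$ be a point of the equator $\{\omega=0\}$ of $\mathbb{S}^2$. Then $p$ is a flat point of the quadratic form $Q$ if and only if $p$ is a singular point at infinity of $\mathbb{Y}_k$, $k=1,2$. Moreover, if $p=(u_0,v_0,0)$ is a singular point at infinity of $\mathbb{Y}_k$ and $f_n$ has no repeated factors, then $H_f(u_0,v_0,0)<0$.
   Context: Write $f=\sum_{i=0}^n f_i$ with $f_i$ homogeneous of degree $i$, $F(u,v,\omega)=\sum_{i=0}^n\omega^{n-i}f_i(u,v)$, $A=-uF_{uu}-vF_{uv}$, $B=-uF_{uv}-vF_{vv}$, $S=u^2F_{uu}+2uvF_{uv}+v^2F_{vv}$, and let $Q=\omega^2F_{uu}du^2+2\omega^2F_{uv}du\,dv+\omega^2F_{vv}dv^2+2\omega A\,du\,d\omega+2\omega B\,dv\,d\omega+S\,d\omega^2$, restricted to the unit sphere $\mathbb{S}^2\subset\mathbb{R}^3=\{(u,v,\omega)\}$; on each open hemisphere it is a nonvanishing multiple of the form induced from $\mathrm{II}_f=f_{xx}dx^2+2f_{xy}dxdy+f_{yy}dy^2$ via $(u,v,\omega)\mapsto(u/\omega,v/\omega)$. $\mathbb{Y}_1,\mathbb{Y}_2$ are the two fields of lines on $\mathbb{S}^2$ given by the solutions $\xi\in T_p\mathbb{S}^2$ of $Q_p(\xi,\xi)=0$. A flat point of $Q$ is a point where all coefficients $\omega^2F_{uu},\omega^2F_{uv},\omega^2F_{vv},\omega A,\omega B,S$ vanish.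 A singular point of $\mathbb{Y}_k$ is a point $p$ at which the restriction of $Q_p$ to $T_p\mathbb{S}^2$ vanishes identically (so the line fields are not determined there); a singular point at infinity is a singular point lying on the equator. $H_f$ is the homogenization $z^{2n-4}\mathrm{Hess}\,f(x/z,y/z)$ of $\mathrm{Hess}\,f=f_{xx}f_{yy}-f_{xy}^2$, so $H_f(x,y,0)=\mathrm{Hess}\,f_n(x,y)$. *)

theory Defs
  imports "HOL-Analysis.Analysis"
begin

text \<open>A real polynomial f in x,y of degree at most n is given by its coefficients
  c i j (coefficient of x^i y^j), with c i j = 0 whenever i + j > n.\<close>

definition coeffs_bounded :: "(nat \<Rightarrow> nat \<Rightarrow> real) \<Rightarrow> nat \<Rightarrow> bool" where
  "coeffs_bounded c n \<longleftrightarrow> (\<forall>i j. n < i + j \<longrightarrow> c i j = 0)"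

definition has_degree :: "(nat \<Rightarrow> nat \<Rightarrow> real) \<Rightarrow> nat \<Rightarrow> bool" where
  "has_degree c n \<longleftrightarrow> coeffs_bounded c n \<and> (\<exists>i j. i + j = n \<and> c i j \<noteq> 0)"

definition polyf :: "(nat \<Rightarrow> nat \<Rightarrow> real) \<Rightarrow> nat \<Rightarrow> real \<Rightarrow> real \<Rightarrow> real" where
  "polyf c n x y = (\<Sum>i\<le>n. \<Sum>j\<le>n - i. c i j * x ^ i * y ^ j)"

definition hom_part :: "(nat \<Rightarrow> nat \<Rightarrow> real) \<Rightarrow> nat \<Rightarrow> real \<Rightarrow> real \<Rightarrow> real" where
  "hom_part c k x y = (\<Sum>i\<le>k. c i (k - i) * x ^ i * y ^ (k - i))"

definition homF :: "(nat \<Rightarrow> nat \<Rightarrow> real) \<Rightarrow> nat \<Rightarrow> real \<Rightarrow> real \<Rightarrow> real \<Rightarrow> real" where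
  "homF c n u v w = (\<Sum>k\<le>n. w ^ (n - k) * hom_part c k u v)"

definition d_uu :: "(real \<Rightarrow> real \<Rightarrow> real) \<Rightarrow> real \<Rightarrow> real \<Rightarrow> real" where
  "d_uu g u v = deriv (\<lambda>s. deriv (\<lambda>t. g t v) s) u"
definition d_uv :: "(real \<Rightarrow> real \<Rightarrow> real) \<Rightarrow> real \<Rightarrow> real \<Rightarrow> real" where
  "d_uv g u v = deriv (\<lambda>s. deriv (\<lambda>t. g t s) u) v"
definition d_vv :: "(real \<Rightarrow> real \<Rightarrow> real) \<Rightarrow> real \<Rightarrow> real \<Rightarrow> real" where
  "d_vv g u v = deriv (\<lambda>s. deriv (\<lambda>t. g u t) s) v"

definition F_uu where "F_uu c n u v w = d_uu (\<lambda>a b. homF c n a b w) u v"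
definition F_uv where "F_uv c n u v w = d_uv (\<lambda>a b. homF c n a b w) u v"
definition F_vv where "F_vv c n u v w = d_vv (\<lambda>a b. homF c n a b w) u v"

definition coefA where "coefA c n u v w = - u * F_uu c n u v w - v * F_uv c n u v w"
definition coefB where "coefB c n u v w = - u * F_uv c n u v w - v * F_vv c n u v w"
definition coefS where
  "coefS c n u v w = u\<^sup>2 * F_uu c n u v w + 2 * u * v * F_uv c n u v w + v\<^sup>2 * F_vv c n u v w"

text \<open>The quadratic form Q at the point p = (u,v,w), evaluated on xi = (a,b,d)
  (d the d\<omega> component).\<close>
definition formQ :: "(nat \<Rightarrow> nat \<Rightarrow> real) \<Rightarrow> nat \<Rightarrow> real \<times> real \<times> real \<Rightarrow> real \<times> real \<times> real \<Rightarrow> real" where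
  "formQ c n p xi = (case p of (u, v, w) \<Rightarrow> case xi of (a, b, d) \<Rightarrow>
      w\<^sup>2 * F_uu c n u v w * a\<^sup>2 + 2 * w\<^sup>2 * F_uv c n u v w * a * b + w\<^sup>2 * F_vv c n u v w * b\<^sup>2
      + 2 * w * coefA c n u v w * a * d + 2 * w * coefB c n u v w * b * d
      + coefS c n u v w * d\<^sup>2)"

definition on_sphere :: "real \<times> real \<times> real \<Rightarrow> bool" where
  "on_sphere p = (case p of (u, v, w) \<Rightarrow> u\<^sup>2 + v\<^sup>2 + w\<^sup>2 = 1)"

definition tangent_S2 :: "real \<times> real \<times> real \<Rightarrow> real \<times> real \<times> real \<Rightarrow> bool" where
  "tangent_S2 p xi = (case p of (u, v, w) \<Rightarrow> case xi of (a, b, d) \<Rightarrow> u * a + v * b + w * d = 0)"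

definition flat_point where
  "flat_point c n p = (case p of (u, v, w) \<Rightarrow>
     w\<^sup>2 * F_uu c n u v w = 0 \<and> w\<^sup>2 * F_uv c n u v w = 0 \<and> w\<^sup>2 * F_vv c n u v w = 0 \<and>
     w * coefA c n u v w = 0 \<and> w * coefB c n u v w = 0 \<and> coefS c n u v w = 0)"

text \<open>singular point of the line fields Y_1, Y_2 (common to both): the restriction of
  Q_p to T_p S^2 vanishes identically\<close>
definition singular_point where
  "singular_point c n p \<longleftrightarrow> on_sphere p \<and> (\<forall>xi. tangent_S2 p xi \<longrightarrow> formQ c n p xi = 0)"

definition singular_point_at_infinity where
  "singular_point_at_infinity c n p \<longleftrightarrow> singular_point c n p \<and> snd (snd p) = 0"

definition hess :: "(real \<Rightarrow> real \<Rightarrow> real) \<Rightarrow> real \<Rightarrow> real \<Rightarrow> real" where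
  "hess g x y = d_uu g x y * d_vv g x y - (d_uv g x y)\<^sup>2"

text \<open>Real polynomial functions in two variables, and "no repeated factors" in R[x,y]
  (polynomial functions on R^2 correspond bijectively to polynomials).\<close>
definition is_poly2 :: "(real \<Rightarrow> real \<Rightarrow> real) \<Rightarrow> bool" where
  "is_poly2 g \<longleftrightarrow> (\<exists>(a :: nat \<Rightarrow> nat \<Rightarrow> real) N. \<forall>x y. g x y = (\<Sum>i\<le>N. \<Sum>j\<le>N. a i j * x ^ i * y ^ j))"

definition no_repeated_factors :: "(real \<Rightarrow> real \<Rightarrow> real) \<Rightarrow> bool" where
  "no_repeated_factors g \<longleftrightarrow>
     \<not> (\<exists>h k. is_poly2 h \<and> is_poly2 k \<and> \<not> (\<exists>r. \<forall>x y. h x y = r) \<and>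
             (\<forall>x y. g x y = (h x y)\<^sup>2 * k x y))"

end

theory Submission
  imports Defs "HOL-Computational_Algebra.Polynomial"
begin

text \<open>On the equator \<open>\<omega> = 0\<close> every coefficient of \<open>Q\<close> except \<open>S\<close> carries a factor \<open>\<omega>\<close>,
  and \<open>(0, 0, 1)\<close> is tangent there, so flatness and singularity both reduce to \<open>S(u, v, 0) = 0\<close>.
  At \<open>\<omega> = 0\<close> the form \<open>F\<close> is just \<open>f\<^sub>n\<close>, and Euler's relation applied twice gives
  \<open>S = n (n - 1) f\<^sub>n(u, v)\<close>. At a zero \<open>(u, v)\<close> of \<open>f\<^sub>n\<close> on the unit circle, Euler's relations
  for the first partials determine the Hessian rows through \<open>l = u \<partial>\<^sub>yf\<^sub>n - v \<partial>\<^sub>xf\<^sub>n\<close>, whence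
  \<open>Hess f\<^sub>n(u, v) = -((n - 1) l)\<^sup>2\<close>; and \<open>l = 0\<close> would make \<open>(u, v)\<close> a critical zero of \<open>f\<^sub>n\<close>,
  so that \<open>(v x - u y)\<^sup>2\<close> divides \<open>f\<^sub>n\<close>.\<close>

definition binary_form :: "nat \<Rightarrow> (nat \<Rightarrow> real) \<Rightarrow> real \<Rightarrow> real \<Rightarrow> real" where
  "binary_form n a x y = (\<Sum>i\<le>n. a i * x ^ i * y ^ (n - i))"

definition form_dx :: "(nat \<Rightarrow> real) \<Rightarrow> nat \<Rightarrow> real" where
  "form_dx a i = real (Suc i) * a (Suc i)"

definition form_dy :: "nat \<Rightarrow> (nat \<Rightarrow> real) \<Rightarrow> nat \<Rightarrow> real" where
  "form_dy n a i = real (n - i) * a i"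

lemma binary_form_has_derivative_x:
  assumes "n \<ge> 1"
  shows "((\<lambda>t. binary_form n a t y) has_real_derivative binary_form (n - 1) (form_dx a) x y) (at x)"
proof -
  obtain m where n: "n = Suc m" using assms by (cases n) auto
  have "((\<lambda>t. binary_form n a t y) has_real_derivative
          (\<Sum>i\<le>Suc m. a i * (real i * x ^ (i - 1)) * y ^ (Suc m - i))) (at x)"
    unfolding binary_form_def n by (intro DERIV_sum DERIV_cmult_right DERIV_cmult) (simp add: DERIV_pow)
  moreover have "(\<Sum>i\<le>Suc m. a i * (real i * x ^ (i - 1)) * y ^ (Suc m - i)) = binary_form (n - 1) (form_dx a) x y"
    unfolding binary_form_def form_dx_def n by (subst sum.atMost_Suc_shift) (simp add: mult_ac)
  ultimately show ?thesis by simp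
qed

lemma binary_form_has_derivative_y:
  "((\<lambda>t. binary_form n a x t) has_real_derivative binary_form (n - 1) (form_dy n a) x y) (at y)"
proof (cases n)
  case 0 then show ?thesis by (simp add: binary_form_def form_dy_def)
next
  case (Suc m)
  have "((\<lambda>t. binary_form n a x t) has_real_derivative
          (\<Sum>i\<le>Suc m. a i * x ^ i * (real (Suc m - i) * y ^ (Suc m - i - 1)))) (at y)"
    unfolding binary_form_def Suc by (intro DERIV_sum DERIV_cmult DERIV_pow[THEN DERIV_cong]) simp
  moreover have "(\<Sum>i\<le>Suc m. a i * x ^ i * (real (Suc m - i) * y ^ (Suc m - i - 1))) = binary_form (n - 1) (form_dy n a) x y"
    unfolding binary_form_def form_dy_def Suc by (auto simp: Suc_diff_le intro!: sum.cong)
  ultimately show ?thesis by simp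
qed

lemma binary_form_euler:
  assumes "n \<ge> 1"
  shows "x * binary_form (n - 1) (form_dx a) x y + y * binary_form (n - 1) (form_dy n a) x y
    = real n * binary_form n a x y"
proof -
  obtain m where n: "n = Suc m" using assms by (cases n) auto
  have dx: "x * binary_form (n - 1) (form_dx a) x y = (\<Sum>i\<le>n. real i * a i * x ^ i * y ^ (n - i))"
    unfolding binary_form_def form_dx_def n sum_distrib_left
    by (subst sum.atMost_Suc_shift) (simp add: mult_ac)
  have dy: "y * binary_form (n - 1) (form_dy n a) x y = (\<Sum>i\<le>n. real (n - i) * a i * x ^ i * y ^ (n - i))"
    unfolding binary_form_def form_dy_def n sum_distrib_left
    by (auto simp: Suc_diff_le mult_ac intro!: sum.cong)
  have "(\<Sum>i\<le>n. real i * a i * x ^ i * y ^ (n - i)) + (\<Sum>i\<le>n. real (n - i) * a i * x ^ i * y ^ (n - i))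
      = (\<Sum>i\<le>n. real n * (a i * x ^ i * y ^ (n - i)))"
    unfolding sum.distrib[symmetric] by (intro sum.cong) (auto simp: of_nat_diff algebra_simps)
  then show ?thesis unfolding dx dy by (simp add: binary_form_def sum_distrib_left)
qed

lemma form_dx_form_dy: "form_dx (form_dy n a) = form_dy (n - 1) (form_dx a)"
  unfolding form_dx_def form_dy_def by auto

lemma d_uu_binary_form:
  assumes "n \<ge> 2"
  shows "d_uu (binary_form n a) x y = binary_form (n - 2) (form_dx (form_dx a)) x y"
proof -
  have "(\<lambda>s. deriv (\<lambda>t. binary_form n a t y) s) = (\<lambda>s. binary_form (n - 1) (form_dx a) s y)"
    using binary_form_has_derivative_x assms by (intro ext DERIV_imp_deriv) simp
  moreover have "deriv (\<lambda>s. binary_form (n - 1) (form_dx a) s y) x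
      = binary_form (n - 1 - 1) (form_dx (form_dx a)) x y"
    using assms by (intro DERIV_imp_deriv binary_form_has_derivative_x) simp
  ultimately show ?thesis unfolding d_uu_def by (simp only: diff_diff_left one_add_one)
qed

lemma d_uv_binary_form:
  assumes "n \<ge> 2"
  shows "d_uv (binary_form n a) x y = binary_form (n - 2) (form_dy (n - 1) (form_dx a)) x y"
proof -
  have "(\<lambda>s. deriv (\<lambda>t. binary_form n a t s) x) = (\<lambda>s. binary_form (n - 1) (form_dx a) x s)"
    using binary_form_has_derivative_x assms by (intro ext DERIV_imp_deriv) simp
  moreover have "deriv (\<lambda>s. binary_form (n - 1) (form_dx a) x s) y
      = binary_form (n - 1 - 1) (form_dy (n - 1) (form_dx a)) x y"
    by (intro DERIV_imp_deriv binary_form_has_derivative_y)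
  ultimately show ?thesis unfolding d_uv_def by (simp only: diff_diff_left one_add_one)
qed

lemma d_vv_binary_form:
  "d_vv (binary_form n a) x y = binary_form (n - 2) (form_dy (n - 1) (form_dy n a)) x y"
proof -
  have "(\<lambda>s. deriv (\<lambda>t. binary_form n a x t) s) = (\<lambda>s. binary_form (n - 1) (form_dy n a) x s)"
    by (intro ext DERIV_imp_deriv binary_form_has_derivative_y)
  moreover have "deriv (\<lambda>s. binary_form (n - 1) (form_dy n a) x s) y
      = binary_form (n - 1 - 1) (form_dy (n - 1) (form_dy n a)) x y"
    by (intro DERIV_imp_deriv binary_form_has_derivative_y)
  ultimately show ?thesis unfolding d_vv_def by (simp only: diff_diff_left one_add_one)
qed

lemma binary_form_euler_dx:
  assumes n: "n \<ge> 2"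
  shows "x * d_uu (binary_form n a) x y + y * d_uv (binary_form n a) x y
    = real (n - 1) * binary_form (n - 1) (form_dx a) x y"
proof -
  have "n - 1 \<ge> 1" and n2: "n - 1 - 1 = n - 2"
    using n by simp_all
  from binary_form_euler[OF this(1), where a = "form_dx a"] show ?thesis
    unfolding d_uu_binary_form[OF n] d_uv_binary_form[OF n] n2 .
qed

lemma binary_form_euler_dy:
  assumes n: "n \<ge> 2"
  shows "x * d_uv (binary_form n a) x y + y * d_vv (binary_form n a) x y
    = real (n - 1) * binary_form (n - 1) (form_dy n a) x y"
proof -
  have "n - 1 \<ge> 1" and n2: "n - 1 - 1 = n - 2"
    using n by simp_all
  from binary_form_euler[OF this(1), where a = "form_dy n a"] show ?thesis
    unfolding d_uv_binary_form[OF n] d_vv_binary_form n2 form_dx_form_dy .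
qed

lemma binary_form_swap: "binary_form n a y x = binary_form n (\<lambda>i. a (n - i)) x y"
  unfolding binary_form_def
  by (rule sum.reindex_bij_witness[where i="\<lambda>i. n - i" and j="\<lambda>i. n - i"]) (auto simp: mult_ac)

lemma binary_form_dy_swap:
  assumes "n \<ge> 1"
  shows "binary_form (n - 1) (form_dy n a) x y = binary_form (n - 1) (form_dx (\<lambda>i. a (n - i))) y x"
proof (rule DERIV_unique)
  show "((\<lambda>t. binary_form n a x t) has_real_derivative binary_form (n - 1) (form_dy n a) x y) (at y)"
    by (rule binary_form_has_derivative_y)
  show "((\<lambda>t. binary_form n a x t) has_real_derivative binary_form (n - 1) (form_dx (\<lambda>i. a (n - i))) y x) (at y)"
    unfolding binary_form_swap[of n a x] using assms by (rule binary_form_has_derivative_x)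
qed

lemma binary_form_dehomogenize:
  assumes "y \<noteq> 0"
  shows "binary_form n a x y = y ^ n * poly (\<Sum>i\<le>n. monom (a i) i) (x / y)"
  unfolding binary_form_def poly_sum poly_monom sum_distrib_left
proof (rule sum.cong[OF refl])
  fix i assume "i \<in> {..n}"
  then have "y ^ n = y ^ i * y ^ (n - i)" by (simp flip: power_add)
  then show "a i * x ^ i * y ^ (n - i) = y ^ n * (a i * (x / y) ^ i)"
    using assms by (simp add: power_divide field_simps)
qed

lemma continuous_eq_at_punctured:
  fixes f g :: "real \<Rightarrow> real"
  assumes "isCont f x0" "isCont g x0" "\<And>x. x \<noteq> x0 \<Longrightarrow> f x = g x"
  shows "f x0 = g x0"
proof -
  have "(f \<longlongrightarrow> g x0) (at x0)"
    using assms(2,3) by (auto simp: isCont_def eventually_at_filter intro: Lim_transform_eventually)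
  then show ?thesis
    using assms(1) isCont_def tendsto_unique[OF at_neq_bot] by blast
qed

lemma linear_square_dvd_if_double_root:
  fixes P :: "real poly"
  assumes "poly P r = 0" "poly (pderiv P) r = 0"
  shows "[:-r, 1:]\<^sup>2 dvd P"
proof -
  obtain Q where Q: "P = [:-r, 1:] * Q"
    using assms(1) poly_eq_0_iff_dvd by blast
  have "pderiv P = [:-r, 1:] * pderiv Q + Q"
    unfolding Q pderiv_mult by (simp add: pderiv_pCons)
  then have "poly Q r = 0"
    using assms(2) by simp
  then obtain K where "Q = [:-r, 1:] * K"
    using poly_eq_0_iff_dvd by blast
  then show ?thesis
    by (metis Q dvd_triv_left mult.assoc power2_eq_square)
qed

lemma isCont_binary_form: "isCont (binary_form n a x) y"
  unfolding binary_form_def by (intro continuous_intros)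

lemma binary_form_dehomogenized_double_root:
  assumes y0: "y0 \<noteq> 0" and n: "n \<ge> 1"
    and zero: "binary_form n a x0 y0 = 0"
    and critical: "binary_form (n - 1) (form_dx a) x0 y0 = 0"
  shows "[:- (x0 / y0), 1:]\<^sup>2 dvd (\<Sum>i\<le>n. monom (a i) i)"
proof (rule linear_square_dvd_if_double_root)
  define P where "P = (\<Sum>i\<le>n. monom (a i) i)"
  have dehom: "binary_form n a t y0 = y0 ^ n * poly P (t / y0)" for t
    unfolding P_def using y0 by (rule binary_form_dehomogenize)
  show "poly P (x0 / y0) = 0"
    using dehom[of x0] zero y0 by simp
  have "((\<lambda>t. y0 ^ n * poly P (t / y0)) has_real_derivative
      y0 ^ n * (poly (pderiv P) (x0 / y0) * (1 / y0))) (at x0)"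
    using y0 by (auto intro!: derivative_eq_intros)
  moreover have "((\<lambda>t. y0 ^ n * poly P (t / y0)) has_real_derivative 0) (at x0)"
    using binary_form_has_derivative_x[of n a y0 x0] n critical by (simp add: dehom)
  ultimately show "poly (pderiv P) (x0 / y0) = 0"
    using DERIV_unique y0 by fastforce
qed

lemma binary_form_square_factor:
  assumes y0: "y0 \<noteq> 0" and n: "n \<ge> 2"
    and zero: "binary_form n a x0 y0 = 0"
    and critical: "binary_form (n - 1) (form_dx a) x0 y0 = 0"
  shows "\<exists>K. \<forall>x y. binary_form n a x y = (y0 * x - x0 * y)\<^sup>2 * binary_form (n - 2) K x y"
proof -
  define P where "P = (\<Sum>i\<le>n. monom (a i) i)"
  define r where "r = x0 / y0"
  have dehom: "binary_form n a x y = y ^ n * poly P (x / y)" if "y \<noteq> 0" for x y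
    unfolding P_def using that by (rule binary_form_dehomogenize)
  obtain K where P: "P = [:-r, 1:]\<^sup>2 * K"
    using binary_form_dehomogenized_double_root[OF y0 _ zero critical] n
    unfolding P_def r_def by fastforce
  define K' where "K' = smult (1 / y0\<^sup>2) K"
  have "degree P \<le> n"
    unfolding P_def by (rule degree_sum_le) (auto intro: order.trans[OF degree_monom_le])
  then have "degree K' \<le> n - 2"
    unfolding P K'_def by (cases "K = 0") (auto simp: degree_mult_eq degree_linear_power)
  then have K': "binary_form (n - 2) (coeff K') x y = y ^ (n - 2) * poly K' (x / y)" if "y \<noteq> 0" for x y
    using binary_form_dehomogenize[OF that, of "n - 2" "coeff K'" x] by (simp add: poly_as_sum_of_monoms')
  have factor: "binary_form n a x y = (y0 * x - x0 * y)\<^sup>2 * binary_form (n - 2) (coeff K') x y"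
    if "y \<noteq> 0" for x y
  proof -
    have pow: "y ^ n = y\<^sup>2 * y ^ (n - 2)"
      using n by (metis le_add_diff_inverse power_add)
    have "y * (x / y - r) = (y0 * x - x0 * y) / y0"
      using that y0 by (simp add: r_def field_simps)
    have "binary_form n a x y = y\<^sup>2 * y ^ (n - 2) * ((x / y - r)\<^sup>2 * poly K (x / y))"
      unfolding dehom[OF that] P pow by simp
    also have "\<dots> = (y * (x / y - r))\<^sup>2 * (y ^ (n - 2) * poly K (x / y))"
      by (simp add: power_mult_distrib)
    also have "\<dots> = (y0 * x - x0 * y)\<^sup>2 * binary_form (n - 2) (coeff K') x y"
      unfolding K'[OF that] \<open>y * (x / y - r) = _\<close> using y0 by (simp add: K'_def power_divide)
    finally show ?thesis .
  qed
  have "binary_form n a x y = (y0 * x - x0 * y)\<^sup>2 * binary_form (n - 2) (coeff K') x y" for x y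
  proof (cases "y = 0")
    case True
    show ?thesis
      unfolding True
      by (rule continuous_eq_at_punctured[where f="binary_form n a x"
          and g="\<lambda>y. (y0 * x - x0 * y)\<^sup>2 * binary_form (n - 2) (coeff K') x y"])
        (auto intro!: continuous_intros isCont_binary_form factor)
  qed (rule factor)
  then show ?thesis by blast
qed

lemma binary_form_square_factor_at_critical_zero:
  assumes "(x0, y0) \<noteq> (0, 0)" and n: "n \<ge> 2"
    and zero: "binary_form n a x0 y0 = 0"
    and critical_x: "binary_form (n - 1) (form_dx a) x0 y0 = 0"
    and critical_y: "binary_form (n - 1) (form_dy n a) x0 y0 = 0"
  shows "\<exists>K. \<forall>x y. binary_form n a x y = (y0 * x - x0 * y)\<^sup>2 * binary_form (n - 2) K x y"
proof (cases "y0 = 0")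
  case False
  then show ?thesis
    using n zero critical_x by (rule binary_form_square_factor)
next
  case True
  with assms(1) have "x0 \<noteq> 0" by simp
  define b where "b = (\<lambda>i. a (n - i))"
  have "binary_form n b y0 x0 = 0"
    using zero binary_form_swap[of n a x0 y0] by (simp add: b_def)
  moreover have "binary_form (n - 1) (form_dx b) y0 x0 = 0"
    using critical_y binary_form_dy_swap[of n a x0 y0] n by (simp add: b_def)
  ultimately obtain K where K: "\<And>x y. binary_form n b x y = (x0 * x - y0 * y)\<^sup>2 * binary_form (n - 2) K x y"
    using binary_form_square_factor[OF \<open>x0 \<noteq> 0\<close> n] by blast
  have "binary_form n a x y = (y0 * x - x0 * y)\<^sup>2 * binary_form (n - 2) (\<lambda>i. K (n - 2 - i)) x y" for x y
  proof -
    have "binary_form n a x y = binary_form n b y x"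
      unfolding b_def by (rule binary_form_swap)
    also have "\<dots> = (x0 * y - y0 * x)\<^sup>2 * binary_form (n - 2) K y x"
      by (rule K)
    finally show ?thesis
      by (simp only: binary_form_swap[of "n - 2" K] power2_commute)
  qed
  then show ?thesis by blast
qed

lemma is_poly2_binary_form: "is_poly2 (binary_form n a)"
  unfolding is_poly2_def
proof (intro exI allI)
  fix x y :: real
  have "(\<Sum>j\<le>n. (if i + j = n then a i else 0) * x ^ i * y ^ j) = a i * x ^ i * y ^ (n - i)"
    if "i \<le> n" for i
  proof -
    have "(\<Sum>j\<le>n. (if i + j = n then a i else 0) * x ^ i * y ^ j)
        = (\<Sum>j\<le>n. if j = n - i then a i * x ^ i * y ^ j else 0)"
      using that by (intro sum.cong) auto
    then show ?thesis by simp
  qed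
  then show "binary_form n a x y = (\<Sum>i\<le>n. \<Sum>j\<le>n. (if i + j = n then a i else 0) * x ^ i * y ^ j)"
    unfolding binary_form_def by (intro sum.cong) auto
qed

lemma square_of_linear_form_not_no_repeated_factors:
  assumes "(x0, y0) \<noteq> (0, 0)"
    and "\<And>x y. g x y = (y0 * x - x0 * y)\<^sup>2 * binary_form d K x y"
  shows "\<not> no_repeated_factors g"
proof -
  have linear: "(\<lambda>x y. y0 * x - x0 * y) = binary_form 1 (\<lambda>i. if i = 0 then - x0 else y0)"
    by (intro ext) (simp add: binary_form_def)
  have "\<not> (\<exists>r. \<forall>x y. y0 * x - x0 * y = r)"
  proof
    assume "\<exists>r. \<forall>x y. y0 * x - x0 * y = r"
    then obtain r where "\<And>x y. y0 * x - x0 * y = r" by blast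
    from this[of 0 0] this[of y0 "- x0"] have "y0 * y0 + x0 * x0 = 0" by simp
    with assms(1) show False
      by (simp add: sum_squares_eq_zero_iff)
  qed
  then show ?thesis
    unfolding no_repeated_factors_def not_not
    using assms(2) is_poly2_binary_form[of 1] is_poly2_binary_form[of d K]
    by (intro exI[of _ "\<lambda>x y. y0 * x - x0 * y"] exI[of _ "binary_form d K"]) (simp add: linear)
qed

lemma determinant_from_rotated_rows:
  fixes u v p q r m :: real
  assumes unit: "u\<^sup>2 + v\<^sup>2 = 1" and row1: "u * p + v * q = - m * v" and row2: "u * q + v * r = m * u"
  shows "p * r - q\<^sup>2 = - m\<^sup>2"
proof -
  have "p * r - q\<^sup>2 = (p * r - q\<^sup>2) * (u\<^sup>2 + v\<^sup>2)"
    using unit by simp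
  also have "\<dots> = (u * p + v * q) * (u * r - v * q) - (u * q + v * r) * (u * q - v * p)"
    by (simp add: power2_eq_square algebra_simps)
  also have "\<dots> = - m * v * (u * r - v * q) - m * u * (u * q - v * p)"
    unfolding row1 row2 ..
  also have "\<dots> = m * (v * (u * p + v * q) - u * (u * q + v * r))"
    by (simp add: algebra_simps)
  also have "\<dots> = - m\<^sup>2 * (u\<^sup>2 + v\<^sup>2)"
    unfolding row1 row2 by (simp add: power2_eq_square algebra_simps)
  finally show ?thesis
    using unit by simp
qed

lemma hess_binary_form_at_zero:
  assumes n: "n \<ge> 2" and unit: "u\<^sup>2 + v\<^sup>2 = 1" and zero: "binary_form n a u v = 0"
  shows "hess (binary_form n a) u v = - (real (n - 1) *
    (u * binary_form (n - 1) (form_dy n a) u v - v * binary_form (n - 1) (form_dx a) u v))\<^sup>2"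
proof -
  define fx where "fx = binary_form (n - 1) (form_dx a) u v"
  define fy where "fy = binary_form (n - 1) (form_dy n a) u v"
  define l where "l = u * fy - v * fx"
  have euler: "u * fx + v * fy = 0"
    using binary_form_euler[of n u a v] n zero by (simp add: fx_def fy_def)
  have fx: "fx = - v * l"
  proof -
    have "fx = fx * (u\<^sup>2 + v\<^sup>2)" using unit by simp
    also have "\<dots> = u * (u * fx + v * fy) - v * l"
      unfolding l_def by (simp add: power2_eq_square algebra_simps)
    finally show ?thesis using euler by simp
  qed
  have fy: "fy = u * l"
  proof -
    have "fy = fy * (u\<^sup>2 + v\<^sup>2)" using unit by simp
    also have "\<dots> = v * (u * fx + v * fy) + u * l"
      unfolding l_def by (simp add: power2_eq_square algebra_simps)
    finally show ?thesis using euler by simp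
  qed
  have row1: "u * d_uu (binary_form n a) u v + v * d_uv (binary_form n a) u v = - (real (n - 1) * l) * v"
    unfolding binary_form_euler_dx[OF n] fx_def[symmetric] fx by simp
  have row2: "u * d_uv (binary_form n a) u v + v * d_vv (binary_form n a) u v = real (n - 1) * l * u"
    unfolding binary_form_euler_dy[OF n] fy_def[symmetric] fy by simp
  show ?thesis
    unfolding hess_def determinant_from_rotated_rows[OF unit row1 row2]
    by (simp add: l_def fx_def fy_def)
qed

lemma hess_binary_form_neg_at_zero:
  assumes n: "n \<ge> 2" and unit: "u\<^sup>2 + v\<^sup>2 = 1" and zero: "binary_form n a u v = 0"
    and squarefree: "no_repeated_factors (binary_form n a)"
  shows "hess (binary_form n a) u v < 0"
proof -
  define l where "l = u * binary_form (n - 1) (form_dy n a) u v - v * binary_form (n - 1) (form_dx a) u v"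
  have "l \<noteq> 0"
  proof
    assume "l = 0"
    have "u * binary_form (n - 1) (form_dx a) u v + v * binary_form (n - 1) (form_dy n a) u v = 0"
      using binary_form_euler[of n u a v] n zero by simp
    with \<open>l = 0\<close> unit have "binary_form (n - 1) (form_dx a) u v = 0" "binary_form (n - 1) (form_dy n a) u v = 0"
      unfolding l_def by algebra+
    moreover have "(u, v) \<noteq> (0, 0)" using unit by auto
    ultimately show False
      using binary_form_square_factor_at_critical_zero[of u v n a] n zero squarefree
        square_of_linear_form_not_no_repeated_factors by metis
  qed
  then show ?thesis
    using hess_binary_form_at_zero[OF n unit zero] n unfolding l_def by simp
qed

lemma hom_part_eq_binary_form: "hom_part c n = binary_form n (\<lambda>i. c i (n - i))"
  unfolding hom_part_def binary_form_def by (intro ext) simp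

lemma homF_at_infinity: "(\<lambda>u v. homF c n u v 0) = hom_part c n"
  unfolding homF_def by (intro ext) (simp add: power_0_left if_distrib[of "\<lambda>z. z * _"] sum.delta' cong: if_cong)

lemma coefS_at_infinity:
  assumes n: "n \<ge> 2"
  shows "coefS c n u v 0 = real n * real (n - 1) * hom_part c n u v"
proof -
  define a where "a = (\<lambda>i. c i (n - i))"
  have F: "(\<lambda>u v. homF c n u v 0) = binary_form n a"
    unfolding homF_at_infinity hom_part_eq_binary_form a_def ..
  have "coefS c n u v 0 = u * (u * d_uu (binary_form n a) u v + v * d_uv (binary_form n a) u v)
      + v * (u * d_uv (binary_form n a) u v + v * d_vv (binary_form n a) u v)"
    unfolding coefS_def F_uu_def F_uv_def F_vv_def F by (simp add: power2_eq_square algebra_simps)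
  also have "\<dots> = real (n - 1) * (u * binary_form (n - 1) (form_dx a) u v + v * binary_form (n - 1) (form_dy n a) u v)"
    unfolding binary_form_euler_dx[OF n] binary_form_euler_dy[OF n] by (simp add: algebra_simps)
  also have "\<dots> = real n * real (n - 1) * hom_part c n u v"
    using binary_form_euler[of n u a v] n by (simp add: hom_part_eq_binary_form a_def)
  finally show ?thesis .
qed

lemma flat_point_at_infinity_iff: "flat_point c n (u, v, 0) \<longleftrightarrow> coefS c n u v 0 = 0"
  unfolding flat_point_def by simp

lemma singular_point_at_infinity_iff:
  assumes "on_sphere (u, v, 0)"
  shows "singular_point_at_infinity c n (u, v, 0) \<longleftrightarrow> coefS c n u v 0 = 0"
proof
  assume "singular_point_at_infinity c n (u, v, 0)"
  then have "formQ c n (u, v, 0) (0, 0, 1) = 0"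
    unfolding singular_point_at_infinity_def singular_point_def tangent_S2_def by auto
  then show "coefS c n u v 0 = 0"
    unfolding formQ_def by simp
next
  assume "coefS c n u v 0 = 0"
  then show "singular_point_at_infinity c n (u, v, 0)"
    using assms unfolding singular_point_at_infinity_def singular_point_def formQ_def by auto
qed

theorem theorem3:
  fixes c :: "nat \<Rightarrow> nat \<Rightarrow> real" and n :: nat and p :: "real \<times> real \<times> real"
  assumes "has_degree c n" and "n \<ge> 3"
    and "on_sphere p" and "snd (snd p) = 0"
  shows "(flat_point c n p \<longleftrightarrow> singular_point_at_infinity c n p)
    \<and> (\<forall>u0 v0. p = (u0, v0, 0) \<longrightarrow> singular_point_at_infinity c n p
          \<longrightarrow> no_repeated_factors (hom_part c n) \<longrightarrow> hess (hom_part c n) u0 v0 < 0)"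
proof -
  obtain u v where p: "p = (u, v, 0)"
    using assms(4) by (cases p) auto
  have n: "n \<ge> 2"
    using assms(2) by simp
  have sing: "singular_point_at_infinity c n p \<longleftrightarrow> coefS c n u v 0 = 0"
    using assms(3) unfolding p by (rule singular_point_at_infinity_iff)
  have "hess (hom_part c n) u v < 0"
    if "singular_point_at_infinity c n p" and "no_repeated_factors (hom_part c n)"
  proof -
    have "hom_part c n u v = 0"
      using that(1) sing coefS_at_infinity[OF n] n by simp
    moreover have "u\<^sup>2 + v\<^sup>2 = 1"
      using assms(3) unfolding p on_sphere_def by simp
    ultimately show ?thesis
      using hess_binary_form_neg_at_zero[OF n] that(2) unfolding hom_part_eq_binary_form by blast
  qed
  then show ?thesis
    using sing flat_point_at_infinity_iff[of c n u v] p by auto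
qed

end
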